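(* Let $n\geq5$ be a prime. For $i,j\in[n]$ (not necessarily distinct) write $\langle v_i,v_j\rangle^{\downarrow}=(v_{\max\{i,j\}},v_{\min\{i,j\}})$ and $\langle v_i,v_j\rangle^{\uparrow}=(v_{\min\{i,j\}},v_{\max\{i,j\}})$, and let $\langle a\rangle_n=a \bmod n$. For $h\in[n-2]$ and $m\in[n]$ define the edge sets $$S^{\downarrow}_h=\{\langle v_h,v_\ell\rangle^{\downarrow}\mid \ell\in[n-1]\},\qquad S^{\uparrow}_h=\{\langle v_h,v_\ell\rangle^{\uparrow}\mid \ell\in[n]\setminus\{n-2\}\},$$ $$D^{\downarrow}_m=\{\langle v_k,v_\ell\rangle^{\downarrow}\mid k,\ell\in[n]\setminus\{n-2\},\ \langle k+\ell\rangle_n=m\}\cup\{(v_{n-1},v_{n-2})\},$$ $$D^{\uparrow}_m=\{\langle v_k,v_\ell\rangle^{\uparrow}\mid k,\ell\in[n-1],\ \langle k+\ell\rangle_n=m\}\cup\{(v_{n-2},v_{n-1})\}.$$ Let $\mathcal{C}_{{\cal G}_4}$ be the set of all binary graphs $G=(V_n,L)$ such that, over $\mathbb{F}_2$, (a) $\sum_{e\in S^{\downarrow}_h}L(e)=0$ for all $h\in[n-2]$; (b) $\sum_{e\in D^{\downarrow}_m}L(e)=0$ for all $m\in[n]$; (c) $\sum_{e\in S^{\uparrow}_h}L(e)=0$ for all $h\in[n-2]$; (d) $\sum_{e\in D^{\uparrow}_m}L(e)=0$ for all $m\in[n]$. Then $\mathcal{C}_{{\cal G}_4}$ is an optimal binary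 double-node-erasure-correcting code, i.e., it corrects the failure of any two nodes and its redundancy equals $n^2-(n-2)^2=4n-4$.
   Context: $[n]=\{0,\ldots,n-1\}$, $V_n=\{v_0,\ldots,v_{n-1}\}$. A binary graph $G=(V_n,L)$ is a complete directed graph with self loops (edge set $V_n\times V_n$) with labeling $L:V_n\times V_n\to\{0,1\}$. A code over graphs is a set of such graphs; its dimension $k_{\cal G}$ is $\log_2$ of its size and its redundancy is $n^2-k_{\cal G}$. A failure of node $i$ is the erasure of the labels of all edges $(v_i,v_j)$ and $(v_j,v_i)$, $j\in[n]$, with the failed node known. A code is $\rho$-node-erasure-correcting if for every graph in it and every set of $\rho$ failed nodes the erased labels are uniquely determined; any such code has redundancy at least $n^2-(n-\rho)^2$, and it is called optimal if it attains this bound with equality. Double-node-erasure-correcting means $\rho=2$. *)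

theory Defs
  imports Complex_Main "HOL-Computational_Algebra.Primes"
begin

text \<open>Nodes v_0..v_{n-1} are represented by naturals 0..n-1, a directed edge (v_i,v_j)
  by the pair (i,j).  A binary graph on V_n is a labeling L of all pairs in [n] x [n];
  we represent it as a function nat => nat => bool (True = label 1) that is False
  outside [n] x [n], so that distinct graphs correspond to distinct functions.\<close>

definition binary_graphs :: "nat \<Rightarrow> (nat \<Rightarrow> nat \<Rightarrow> bool) set" where
  "binary_graphs n = {L. \<forall>i j. \<not> (i < n \<and> j < n) \<longrightarrow> \<not> L i j}"

definition parity_zero :: "(nat \<Rightarrow> nat \<Rightarrow> bool) \<Rightarrow> (nat \<times> nat) set \<Rightarrow> bool" where
  "parity_zero L S \<longleftrightarrow> even (card {e \<in> S. L (fst e) (snd e)})"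

definition edge_down :: "nat \<Rightarrow> nat \<Rightarrow> nat \<times> nat" where
  "edge_down i j = (max i j, min i j)"

definition edge_up :: "nat \<Rightarrow> nat \<Rightarrow> nat \<times> nat" where
  "edge_up i j = (min i j, max i j)"

definition S_down :: "nat \<Rightarrow> nat \<Rightarrow> (nat \<times> nat) set" where
  "S_down n h = {edge_down h l | l. l < n - 1}"

definition S_up :: "nat \<Rightarrow> nat \<Rightarrow> (nat \<times> nat) set" where
  "S_up n h = {edge_up h l | l. l < n \<and> l \<noteq> n - 2}"

definition D_down :: "nat \<Rightarrow> nat \<Rightarrow> (nat \<times> nat) set" where
  "D_down n m = {edge_down k l | k l. k < n \<and> k \<noteq> n - 2 \<and> l < n \<and> l \<noteq> n - 2 \<and> (k + l) mod n = m}
                 \<union> {(n - 1, n - 2)}"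

definition D_up :: "nat \<Rightarrow> nat \<Rightarrow> (nat \<times> nat) set" where
  "D_up n m = {edge_up k l | k l. k < n - 1 \<and> l < n - 1 \<and> (k + l) mod n = m}
               \<union> {(n - 2, n - 1)}"

definition code_G4 :: "nat \<Rightarrow> (nat \<Rightarrow> nat \<Rightarrow> bool) set" where
  "code_G4 n = {L \<in> binary_graphs n.
      (\<forall>h < n - 2. parity_zero L (S_down n h)) \<and>
      (\<forall>m < n. parity_zero L (D_down n m)) \<and>
      (\<forall>h < n - 2. parity_zero L (S_up n h)) \<and>
      (\<forall>m < n. parity_zero L (D_up n m))}"

text \<open>A code C (a set of binary graphs on V_n) is rho-node-erasure-correcting if, for every
  set F of rho failed nodes, any two codewords agreeing on all edges not incident to a
  node of F are equal (i.e. the erased labels are uniquely determined).\<close>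
definition node_erasure_correcting :: "nat \<Rightarrow> nat \<Rightarrow> (nat \<Rightarrow> nat \<Rightarrow> bool) set \<Rightarrow> bool" where
  "node_erasure_correcting n \<rho> C \<longleftrightarrow>
     (\<forall>F. F \<subseteq> {..<n} \<and> card F = \<rho> \<longrightarrow>
        (\<forall>L1 \<in> C. \<forall>L2 \<in> C.
           (\<forall>i < n. \<forall>j < n. i \<notin> F \<and> j \<notin> F \<longrightarrow> L1 i j = L2 i j) \<longrightarrow> L1 = L2))"

definition code_dimension :: "(nat \<Rightarrow> nat \<Rightarrow> bool) set \<Rightarrow> real" where
  "code_dimension C = log 2 (real (card C))"

definition redundancy :: "nat \<Rightarrow> (nat \<Rightarrow> nat \<Rightarrow> bool) set \<Rightarrow> real" where
  "redundancy n C = real (n ^ 2) - code_dimension C"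

definition optimal_node_erasure_code :: "nat \<Rightarrow> nat \<Rightarrow> (nat \<Rightarrow> nat \<Rightarrow> bool) set \<Rightarrow> bool" where
  "optimal_node_erasure_code n \<rho> C \<longleftrightarrow>
     C \<subseteq> binary_graphs n \<and> node_erasure_correcting n \<rho> C \<and>
     redundancy n C = real (n ^ 2) - real ((n - \<rho>) ^ 2)"

end

theory Submission
  imports Defs "HOL-Number_Theory.Cong"
begin

text \<open>The code is linear, so it corrects two node failures as soon as a codeword whose
  nonzero labels all lie on edges at two nodes a, b vanishes. Enumerate the nodes along the
  progression b, a, 2a - b, ... modulo the prime n. A row check of any other node equates the
  labels of its edges to a and to b, and the anti-diagonal check containing the edge from a
  to a node x also contains the edge from b to the successor of x. Hence the labels are
  constant along arcs of a cycle which is cut only at the positions of the special nodes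
  n - 2 and n - 1, and each arc contains a label forced to vanish; the two self-loops are
  handled by combining the lower-triangle with the upper-triangle checks, which swap the
  roles of the special nodes. For optimality, a codeword is determined by its labels on the
  block of edges among nodes 0, ..., n - 3, and every labeling of the block extends: the
  remaining 4n - 4 edges face 4n - 4 checks whose kernel is trivial by the two-star
  argument.\<close>

section \<open>Parity of finite sets\<close>

lemma card_sym_diff:
  assumes "finite A" "finite B"
  shows "card (sym_diff A B) + 2 * card (A \<inter> B) = card A + card B"
proof -
  have "sym_diff A B = (A \<union> B) - (A \<inter> B)" by blast
  moreover have "card ((A \<union> B) - (A \<inter> B)) = card (A \<union> B) - card (A \<inter> B)"
    using assms by (intro card_Diff_subset) auto
  ultimately have "card (sym_diff A B) = card (A \<union> B) - card (A \<inter> B)" by (simp only:)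
  moreover have "card (A \<inter> B) \<le> card (A \<union> B)"
    using assms by (intro card_mono) auto
  ultimately show ?thesis using card_Un_Int[OF assms] by simp
qed

lemma even_card_sym_diff_iff:
  assumes "finite A" "finite B"
  shows "even (card (sym_diff A B)) \<longleftrightarrow> (even (card A) \<longleftrightarrow> even (card B))"
  using card_sym_diff[OF assms] by presburger

lemma even_card_two_iff:
  assumes "cu \<Longrightarrow> cv \<Longrightarrow> u \<noteq> v"
  shows "even (card {p. (p = u \<and> cu \<or> p = v \<and> cv) \<and> M p}) \<longleftrightarrow> ((cu \<and> M u) \<longleftrightarrow> (cv \<and> M v))"
proof -
  have "{p. (p = u \<and> cu \<or> p = v \<and> cv) \<and> M p} =
      (if cu \<and> M u then {u} else {}) \<union> (if cv \<and> M v then {v} else {})" by auto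
  then show ?thesis using assms by auto
qed

lemma even_card_three_iff:
  assumes "cu \<Longrightarrow> cv \<Longrightarrow> u \<noteq> v" "cu \<Longrightarrow> u \<noteq> w" "cv \<Longrightarrow> v \<noteq> w"
  shows "even (card {p. (p = u \<and> cu \<or> p = v \<and> cv \<or> p = w) \<and> M p}) \<longleftrightarrow>
    (((cu \<and> M u) \<noteq> (cv \<and> M v)) \<longleftrightarrow> M w)"
proof -
  have "{p. (p = u \<and> cu \<or> p = v \<and> cv \<or> p = w) \<and> M p} = (if cu \<and> M u then {u} else {}) \<union>
      (if cv \<and> M v then {v} else {}) \<union> (if M w then {w} else {})" by auto
  then show ?thesis using assms by (cases "M w") (auto simp: card_insert_if)
qed

lemma even_card_filter_single:
  assumes "finite A" "even (card {x \<in> A. f x})" "x \<in> A" "\<And>y. y \<in> A \<Longrightarrow> y \<noteq> x \<Longrightarrow> \<not> f y"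
  shows "\<not> f x"
proof
  assume "f x"
  then have "{x \<in> A. f x} = {x}" using assms(3,4) by auto
  then show False using assms(2) by simp
qed

lemma parity_checks_solvable:
  fixes chk :: "'c \<Rightarrow> 'e set"
  assumes "finite I" "finite E" "card E = card I" "\<And>c. finite (chk c)"
    and kernel_trivial: "\<And>Z. Z \<subseteq> E \<Longrightarrow> \<forall>c \<in> I. even (card (chk c \<inter> Z)) \<Longrightarrow> Z = {}"
    and "Y \<inter> E = {}"
  obtains X where "X \<subseteq> E" "\<forall>c \<in> I. even (card (chk c \<inter> (X \<union> Y)))"
proof -
  define syndrome where "syndrome X = {c \<in> I. odd (card (chk c \<inter> (X \<union> Y)))}" for X
  have "inj_on syndrome (Pow E)"
  proof (rule inj_onI)
    fix X1 X2 assume X: "X1 \<in> Pow E" "X2 \<in> Pow E" "syndrome X1 = syndrome X2"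
    have "even (card (chk c \<inter> sym_diff X1 X2))" if "c \<in> I" for c
    proof -
      have "chk c \<inter> sym_diff X1 X2 = sym_diff (chk c \<inter> (X1 \<union> Y)) (chk c \<inter> (X2 \<union> Y))"
        using X(1,2) assms(6) by blast
      moreover have "odd (card (chk c \<inter> (X1 \<union> Y))) \<longleftrightarrow> odd (card (chk c \<inter> (X2 \<union> Y)))"
        using X(3) that unfolding syndrome_def by blast
      ultimately show ?thesis
        using even_card_sym_diff_iff[of "chk c \<inter> (X1 \<union> Y)" "chk c \<inter> (X2 \<union> Y)"] assms(4) by simp
    qed
    then have "\<forall>c \<in> I. even (card (chk c \<inter> sym_diff X1 X2))" by blast
    then have "sym_diff X1 X2 = {}" using X(1,2) by (intro kernel_trivial) auto
    then show "X1 = X2" by blast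
  qed
  moreover have "syndrome ` Pow E \<subseteq> Pow I" unfolding syndrome_def by auto
  ultimately have "syndrome ` Pow E = Pow I"
    using assms(1-3) by (intro card_subset_eq) (auto simp: card_image card_Pow)
  then obtain X where "X \<subseteq> E" "syndrome X = {}" by (metis Pow_bottom Pow_iff imageE)
  then show ?thesis using that unfolding syndrome_def by auto
qed

section \<open>Arithmetic modulo n\<close>

lemma eq_if_Suc_eq_on_interval:
  fixes h :: "nat \<Rightarrow> 'a"
  assumes "\<And>t. lo \<le> t \<Longrightarrow> t < hi \<Longrightarrow> h (Suc t) = h t" "lo \<le> i" "i \<le> hi"
  shows "h i = h lo"
  using assms(2,3) by (induction rule: dec_induct) (use assms(1) in auto)

lemma Suc_mod_surj:
  fixes n s :: nat
  assumes "2 \<le> n" "s < n" "s \<noteq> 1"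
  obtains t where "1 \<le> t" "t < n" "Suc t mod n = s"
proof (cases "s = 0")
  case True
  with assms show ?thesis by (intro that[of "n - 1"]) auto
next
  case False
  with assms show ?thesis by (intro that[of "s - 1"]) auto
qed

lemma mod_add_left_cancel_less:
  fixes c x y n :: nat
  assumes "(c + x) mod n = (c + y) mod n" "x < n" "y < n"
  shows "x = y"
proof -
  from assms(1) have "[c + x = c + y] (mod n)" by (simp only: cong_def)
  then have "[x = y] (mod n)" by (simp only: cong_add_lcancel_nat)
  then show ?thesis using assms(2,3) by (rule cong_less_modulus_unique_nat)
qed

lemma inj_on_progression_mod_prime:
  fixes n d b :: nat
  assumes "prime n" "\<not> n dvd d"
  shows "inj_on (\<lambda>t. (b + t * d) mod n) {..<n}"
proof (rule inj_onI)
  fix x y assume xy: "x \<in> {..<n}" "y \<in> {..<n}" "(b + x * d) mod n = (b + y * d) mod n"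
  have "coprime d n"
    using assms by (metis coprime_commute prime_imp_coprime_nat)
  then have "[x = y] (mod n)"
    using xy(3) by (simp add: unique_euclidean_semiring_class.cong_def[symmetric]
      cong_add_lcancel_nat cong_mult_rcancel_nat)
  then show "x = y" using xy(1,2) by (simp add: cong_less_modulus_unique_nat)
qed

lemma bij_betw_progression_mod_prime:
  fixes n d b :: nat
  assumes "prime n" "\<not> n dvd d"
  shows "bij_betw (\<lambda>t. (b + t * d) mod n) {..<n} {..<n}"
proof -
  have "(\<lambda>t. (b + t * d) mod n) ` {..<n} \<subseteq> {..<n}"
    using assms(1) prime_gt_0_nat by auto
  with inj_on_progression_mod_prime[OF assms] show ?thesis
    using endo_inj_surj[OF finite_lessThan] by (simp add: bij_betw_def)
qed

lemma progression_mod_step: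
  fixes n d a b :: nat
  assumes "[b + d = a] (mod n)"
  shows "(b + (b + Suc t mod n * d) mod n) mod n = (a + (b + t * d) mod n) mod n"
proof -
  have "[b + (b + Suc t mod n * d) mod n = b + (b + Suc t mod n * d)] (mod n)"
    by (simp add: cong_def mod_add_right_eq)
  also have "[b + (b + Suc t mod n * d) = b + (b + Suc t * d)] (mod n)"
    by (intro cong_add cong_mult cong_refl) (simp add: cong_def)
  also have "b + (b + Suc t * d) = (b + d) + (b + t * d)" by simp
  also have "[(b + d) + (b + t * d) = a + (b + t * d) mod n] (mod n)"
    using assms by (intro cong_add) (simp_all add: cong_def)
  finally show ?thesis by (simp add: cong_def)
qed

lemma progression_mod_prime:
  fixes n a b :: nat
  assumes "prime n" "a < n" "b < n" "a \<noteq> b"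
  defines "\<pi> \<equiv> \<lambda>t. (b + t * ((a + n - b) mod n)) mod n"
  shows "bij_betw \<pi> {..<n} {..<n}" "\<pi> 0 = b" "\<pi> 1 = a"
    "\<And>t. (b + \<pi> (Suc t mod n)) mod n = (a + \<pi> t) mod n"
proof -
  have step: "[b + (a + n - b) mod n = a] (mod n)"
  proof -
    have "[b + (a + n - b) mod n = b + (a + n - b)] (mod n)" by (simp add: cong_def mod_add_right_eq)
    also have "b + (a + n - b) = a + n" using assms(3) by simp
    also have "[a + n = a] (mod n)" by (simp add: cong_def)
    finally show ?thesis .
  qed
  have "(a + n - b) mod n \<noteq> 0"
  proof
    assume "(a + n - b) mod n = 0"
    then have "[b + 0 = a] (mod n)" using step by simp
    then show False using assms(2-4) cong_less_modulus_unique_nat by fastforce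
  qed
  then show "bij_betw \<pi> {..<n} {..<n}"
    unfolding \<pi>_def
    by (intro bij_betw_progression_mod_prime) (use assms(1) in \<open>auto simp: dvd_eq_mod_eq_0\<close>)
  show "\<pi> 0 = b" using assms(3) by (simp add: \<pi>_def)
  show "\<pi> 1 = a" using step assms(2) by (simp add: \<pi>_def cong_def)
  show "(b + \<pi> (Suc t mod n)) mod n = (a + \<pi> t) mod n" for t
    unfolding \<pi>_def using progression_mod_step[OF step] .
qed

lemma square_eq_square_minus_2_plus:
  fixes n :: nat
  assumes "2 \<le> n"
  shows "n ^ 2 = (n - 2) ^ 2 + (4 * n - 4)"
proof -
  obtain k where "n = k + 2" using assms by (metis add.commute le_Suc_ex)
  then show ?thesis by (simp add: power2_eq_square algebra_simps)
qed

section \<open>Two stars read along a progression\<close>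

text \<open>The label of the edge joining the two special nodes, as far as it is visible in the
  stars: it lies in the star of a or b only if one of the positions P, Q is 1 or 0.\<close>

definition corner_label :: "nat \<Rightarrow> nat \<Rightarrow> (nat \<Rightarrow> bool) \<Rightarrow> (nat \<Rightarrow> bool) \<Rightarrow> bool" where
  "corner_label P Q f g =
    (if P = 1 then f Q else if Q = 1 then f P
     else if P = 0 then g Q else if Q = 0 then g P else False)"

text \<open>Here f t and g t are the labels of the edges joining a and b to the t-th node of the
  progression b, a, 2a - b, ..., so f 1 and g 0 are the self-loops at a and b; P and Q are the
  positions of the special nodes left out of the anti-diagonal and of the row checks.\<close>

locale star_checks =
  fixes n P Q :: nat and f g :: "nat \<Rightarrow> bool"
  assumes n_ge_5: "5 \<le> n" and P_less: "P < n" and Q_less: "Q < n" and P_neq_Q: "P \<noteq> Q"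
    and f0_eq_g1: "f 0 = g 1"
    and row_check: "\<And>t. t < n \<Longrightarrow> t \<notin> {0, 1, P, Q} \<Longrightarrow> (Q \<noteq> 1 \<and> f t) = (Q \<noteq> 0 \<and> g t)"
    and row_check_a: "P \<noteq> 1 \<Longrightarrow> Q \<noteq> 1 \<Longrightarrow> even (card {t. t < n \<and> t \<noteq> Q \<and> f t})"
    and row_check_b: "P \<noteq> 0 \<Longrightarrow> Q \<noteq> 0 \<Longrightarrow> even (card {t. t < n \<and> t \<noteq> Q \<and> g t})"
    and diag_check_0: "(P \<noteq> 0 \<and> P \<noteq> 1 \<and> f 0) = corner_label P Q f g"
    and diag_check: "\<And>t. 1 \<le> t \<Longrightarrow> t < n \<Longrightarrow>
      ((t \<noteq> P \<and> P \<noteq> 1 \<and> f t) \<noteq> (Suc t mod n \<noteq> P \<and> P \<noteq> 0 \<and> g (Suc t mod n)))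
        = corner_label P Q f g"
begin

lemma row_check_vanish:
  assumes "\<And>t. t < n \<Longrightarrow> t \<noteq> Q \<Longrightarrow> t \<noteq> P \<Longrightarrow> \<not> h t"
    and "even (card {t. t < n \<and> t \<noteq> Q \<and> h t})"
  shows "\<not> h P"
  using even_card_filter_single[of "{t. t < n \<and> t \<noteq> Q}" h P] assms P_less P_neq_Q
  by (simp add: conj_assoc)

end

text \<open>If neither a nor b is special, row checks give f t = g t and anti-diagonal checks give
  f t = g (t + 1), so f and g are constant on the arcs between P and Q.\<close>

locale generic_star_checks = star_checks +
  assumes P_ge_2: "2 \<le> P" and Q_ge_2: "2 \<le> Q"
begin

lemma not_corner_label: "\<not> corner_label P Q f g"
  using P_ge_2 Q_ge_2 by (simp add: corner_label_def)

lemma not_f0: "\<not> f 0"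
  using diag_check_0 not_corner_label P_ge_2 by simp

lemma not_g1: "\<not> g 1"
  using not_f0 f0_eq_g1 by simp

lemma f_eq_g: "t < n \<Longrightarrow> t \<notin> {0, 1, P, Q} \<Longrightarrow> f t = g t"
  using row_check Q_ge_2 by auto

lemma f_eq_g_Suc: "1 \<le> t \<Longrightarrow> t < n \<Longrightarrow> (t \<noteq> P \<and> f t) = (Suc t mod n \<noteq> P \<and> g (Suc t mod n))"
  using diag_check not_corner_label P_ge_2 by fastforce

lemma f_const_on:
  assumes "1 \<le> lo" "hi < n" "P \<notin> {lo..hi}" "Q \<notin> {lo<..hi}" "t \<in> {lo..hi}"
  shows "f t = f lo"
proof (rule eq_if_Suc_eq_on_interval[of lo hi])
  fix s assume s: "lo \<le> s" "s < hi"
  then have "f s = g (Suc s)" using f_eq_g_Suc[of s] assms by auto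
  also have "\<dots> = f (Suc s)" using f_eq_g[of "Suc s"] s assms by auto
  finally show "f (Suc s) = f s" by simp
qed (use assms in auto)

lemma g_const_on:
  assumes "2 \<le> lo" "hi < n" "P \<notin> {lo..hi}" "Q \<notin> {lo..<hi}" "t \<in> {lo..hi}"
  shows "g t = g lo"
proof (rule eq_if_Suc_eq_on_interval[of lo hi])
  fix s assume s: "lo \<le> s" "s < hi"
  then have "g (Suc s) = f s" using f_eq_g_Suc[of s] assms by auto
  also have "\<dots> = g s" using f_eq_g[of s] s assms by auto
  finally show "g (Suc s) = g s" .
qed (use assms in auto)

lemma not_f_before_P: "\<not> f (P - 1)"
proof -
  have "1 \<le> P - 1" "P - 1 < n" "P - 1 \<noteq> P" "Suc (P - 1) mod n = P"
    using P_ge_2 P_less by auto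
  then show ?thesis using f_eq_g_Suc[of "P - 1"] by simp
qed

lemma not_g_after_P: "\<not> g (Suc P mod n)"
proof -
  have "Suc P mod n \<noteq> P"
    using P_less n_ge_5 by (cases "Suc P = n") auto
  then show ?thesis using f_eq_g_Suc[of P] P_ge_2 P_less by simp
qed

lemma f_last_eq_g0: "n - 1 \<noteq> P \<Longrightarrow> f (n - 1) = g 0"
  using f_eq_g_Suc[of "n - 1"] n_ge_5 P_ge_2 by simp

lemma not_f1_if_P_less_Q:
  assumes "P < Q" shows "\<not> f 1"
proof -
  have "f (P - 1) = f 1"
    using assms P_ge_2 Q_less by (intro f_const_on[of 1 "P - 1"]) auto
  then show ?thesis using not_f_before_P by simp
qed

lemma not_g0_if_Q_less_P:
  assumes "Q < P" shows "\<not> g 0"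
proof (cases "P = n - 1")
  case True
  then show ?thesis using not_g_after_P n_ge_5 by simp
next
  case False
  then have "g (n - 1) = g (Suc P)"
    using g_const_on[of "Suc P" "n - 1" "n - 1"] False assms P_ge_2 P_less by auto
  moreover have "f (n - 1) = g (n - 1)"
  proof (rule f_eq_g)
    show "n - 1 < n" "n - 1 \<notin> {0, 1, P, Q}" using False assms P_less n_ge_5 by auto
  qed
  moreover have "Suc P mod n = Suc P"
    using False P_less by simp
  ultimately show ?thesis
    using f_last_eq_g0[OF False[symmetric]] not_g_after_P by simp
qed

lemma not_f_off_P:
  assumes "\<not> f 1" "\<not> g 0" "t < n" "t \<noteq> P"
  shows "\<not> f t"
proof -
  consider "t = 0" | "1 \<le> t" "t < P" "Q < P" "Q \<le> t" | "1 \<le> t" "t < P" "t < Q \<or> P < Q"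
    | "P < t" "P < Q" "Q \<le> t" | "P < t" "t < Q \<or> Q < P"
    using assms(4) P_neq_Q by linarith
  then show ?thesis
  proof cases
    case 1
    then show ?thesis using not_f0 by simp
  next
    case 2
    have "f t = f Q" "f (P - 1) = f Q"
      using 2 Q_ge_2 P_less by (intro f_const_on[of Q "P - 1"]; auto)+
    then show ?thesis using not_f_before_P by simp
  next
    case 3
    then have "f t = f 1" using assms(3) by (intro f_const_on[of 1 t]) auto
    then show ?thesis using assms(1) by simp
  next
    case 4
    have "f t = f Q" "f (n - 1) = f Q"
      using 4 Q_ge_2 Q_less assms(3) by (intro f_const_on[of Q "n - 1"]; auto)+
    moreover have "n - 1 \<noteq> P" using 4 Q_less by simp
    ultimately show ?thesis using f_last_eq_g0 assms(2) by simp
  next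
    case 5
    then have "g t = g (Suc P)"
      using P_ge_2 assms(3) by (intro g_const_on[of "Suc P" t]) auto
    moreover have "f t = g t" using 5 P_ge_2 assms(3) by (intro f_eq_g) auto
    moreover have "Suc P mod n = Suc P" using 5 assms(3) by simp
    ultimately show ?thesis using not_g_after_P by simp
  qed
qed

lemma not_g_Q:
  assumes "\<not> f 1"
  shows "\<not> g Q"
proof (cases "P < Q")
  case True
  then have "g Q = g (Suc P)"
    using P_ge_2 Q_less by (intro g_const_on[of "Suc P" Q]) auto
  moreover have "Suc P mod n = Suc P" using True Q_less by simp
  ultimately show ?thesis using not_g_after_P by simp
next
  case False
  then have "g Q = g 2"
    using P_neq_Q Q_ge_2 P_less by (intro g_const_on[of 2 Q]) auto
  moreover have "g 2 = f 1"
    using f_eq_g_Suc[of 1] False P_neq_Q Q_ge_2 n_ge_5 by (simp add: numeral_2_eq_2)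
  ultimately show ?thesis using assms by simp
qed

lemma vanish:
  assumes "\<not> f 1" "\<not> g 0" "t < n"
  shows "\<not> f t \<and> \<not> g t"
proof -
  have f_off_P: "\<not> f s" if "s < n" "s \<noteq> P" for s
    using not_f_off_P assms(1,2) that by blast
  have g_off_P: "\<not> g s" if "s < n" "s \<noteq> P" for s
  proof (cases "s \<in> {0, 1, Q}")
    case True
    then show ?thesis using assms(2) not_g1 not_g_Q[OF assms(1)] by auto
  next
    case False
    then show ?thesis using f_eq_g[of s] f_off_P[of s] that by auto
  qed
  have "\<not> f P" "\<not> g P"
    by (rule row_check_vanish; use f_off_P g_off_P row_check_a row_check_b P_ge_2 Q_ge_2 in auto)+
  then show ?thesis using f_off_P g_off_P assms(3) by blast
qed

end

context star_checks
begin

lemma P_eq_1_case: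
  assumes "P = 1" "2 \<le> Q"
  shows "\<not> g 0" and "\<not> f 1 \<Longrightarrow> t < n \<Longrightarrow> \<not> f t \<and> \<not> g t"
proof -
  have corner: "corner_label P Q f g = f Q" using assms by (simp add: corner_label_def)
  have fQ: "\<not> f Q" using diag_check_0 assms corner by simp
  have g_off_1: "\<not> g s" if s: "s < n" "s \<noteq> 1" for s
  proof -
    obtain t where "1 \<le> t" "t < n" "Suc t mod n = s" 
      by (rule Suc_mod_surj[of n s]) (use s n_ge_5 in auto)
    then show ?thesis using diag_check[of t] corner fQ assms s by auto
  qed
  then show "\<not> g 0" using n_ge_5 by simp
  have g1: "\<not> g 1"
    using row_check_vanish[of g] row_check_b g_off_1 assms by auto
  assume "\<not> f 1" "t < n"
  then show "\<not> f t \<and> \<not> g t"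
    using row_check[of t] g_off_1[of t] g1 f0_eq_g1 fQ assms by (cases "t \<in> {0, 1, Q}") auto
qed

lemma P_eq_0_case:
  assumes "P = 0" "2 \<le> Q"
  shows "\<not> f 1" and "\<not> g 0 \<Longrightarrow> t < n \<Longrightarrow> \<not> f t \<and> \<not> g t"
proof -
  have corner: "corner_label P Q f g = g Q" using assms by (simp add: corner_label_def)
  have gQ: "\<not> g Q" using diag_check_0 assms corner by simp
  have f_off_0: "\<not> f t" if "1 \<le> t" "t < n" for t
    using diag_check[OF that] corner gQ assms that by auto
  then show "\<not> f 1" using n_ge_5 by simp
  have f0: "\<not> f 0"
    using row_check_vanish[of f] row_check_a f_off_0 assms by auto
  assume "\<not> g 0" "t < n"
  then show "\<not> f t \<and> \<not> g t"
    using row_check[of t] f_off_0[of t] f0 f0_eq_g1 gQ assms by (cases "t \<in> {0, 1, Q}") auto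
qed

lemma P_eq_1_Q_eq_0_case:
  assumes "P = 1" "Q = 0"
  shows "\<not> g 0" and "\<not> f 1 \<Longrightarrow> t < n \<Longrightarrow> \<not> f t \<and> \<not> g t"
proof -
  have corner: "corner_label P Q f g = f 0" using assms by (simp add: corner_label_def)
  have f0: "\<not> f 0" using diag_check_0 assms corner by simp
  have g_off_1: "\<not> g s" if s: "s < n" "s \<noteq> 1" for s
  proof -
    obtain t where "1 \<le> t" "t < n" "Suc t mod n = s" 
      by (rule Suc_mod_surj[of n s]) (use s n_ge_5 in auto)
    then show ?thesis using diag_check[of t] corner f0 assms s by auto
  qed
  then show "\<not> g 0" using n_ge_5 by simp
  assume "\<not> f 1" "t < n"
  then show "\<not> f t \<and> \<not> g t"
    using row_check[of t] g_off_1[of t] f0 f0_eq_g1 assms by (cases "t \<in> {0, 1}") auto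
qed

lemma P_eq_0_Q_eq_1_case:
  assumes "P = 0" "Q = 1"
  shows "\<not> f 1" and "\<not> g 0 \<Longrightarrow> t < n \<Longrightarrow> \<not> f t \<and> \<not> g t"
proof -
  have corner: "corner_label P Q f g = f 0" using assms by (simp add: corner_label_def)
  have f0: "\<not> f 0" using diag_check_0 assms corner by simp
  have f_off_0: "\<not> f t" if "1 \<le> t" "t < n" for t
    using diag_check[OF that] corner f0 assms that by auto
  then show "\<not> f 1" using n_ge_5 by simp
  assume "\<not> g 0" "t < n"
  then show "\<not> f t \<and> \<not> g t"
    using row_check[of t] f_off_0[of t] f0 f0_eq_g1 assms by (cases "t \<in> {0, 1}") auto
qed

lemma Q_eq_1_case:
  assumes "Q = 1" "2 \<le> P"
  shows "P \<noteq> n - 1 \<Longrightarrow> \<not> f 1" and "P = n - 1 \<Longrightarrow> f 1 = g 0"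
    and "\<not> f 1 \<Longrightarrow> \<not> g 0 \<Longrightarrow> t < n \<Longrightarrow> \<not> f t \<and> \<not> g t"
proof -
  have corner: "corner_label P Q f g = f P" using assms by (simp add: corner_label_def)
  have g_off: "\<not> g s" if "s < n" "s \<notin> {0, 1, P}" for s
    using row_check[of s] that assms by auto
  have f0: "f 0 = f P" using diag_check_0 corner assms by simp
  have g_after_P: "g (Suc P mod n) = f P"
  proof -
    have "Suc P mod n \<noteq> P" using P_less n_ge_5 by (cases "Suc P = n") auto
    then show ?thesis using diag_check[of P] corner P_less assms by auto
  qed
  have f1: "f 1 = f P"
    using diag_check[of 1] corner n_ge_5 g_off[of 2] assms
    by (cases "P = 2") (simp_all add: numeral_2_eq_2)
  show "\<not> f 1" if "P \<noteq> n - 1"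
  proof -
    have "Suc P < n" using that P_less by simp
    then show ?thesis using f1 g_after_P g_off[of "Suc P"] assms by simp
  qed
  show "f 1 = g 0" if "P = n - 1"
    using f1 g_after_P that P_less by simp
  assume f1_off: "\<not> f 1" and g0: "\<not> g 0" and "t < n"
  have fP: "\<not> f P" using f1 f1_off by simp
  have f_off: "\<not> f s" if "1 \<le> s" "s < n" "s \<noteq> P" for s
  proof -
    have "\<not> (Suc s mod n \<noteq> P \<and> g (Suc s mod n))"
      using g0 g_off[of "Suc s mod n"] that by (cases "Suc s = n") auto
    then show ?thesis using diag_check[of s] corner fP assms that by auto
  qed
  have gP: "\<not> g P"
  proof (rule row_check_vanish)
    show "\<not> g s" if "s < n" "s \<noteq> Q" "s \<noteq> P" for s
      using g_off[of s] g0 that assms by (cases "s = 0") auto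
  qed (use row_check_b assms in auto)
  show "\<not> f t \<and> \<not> g t"
    using f0 fP f_off[of t] g_off[of t] g0 gP f0_eq_g1 \<open>t < n\<close> by (cases "t \<in> {0, 1, P}") auto
qed

lemma Q_eq_0_case:
  assumes "Q = 0" "2 \<le> P"
  shows "P \<noteq> 2 \<Longrightarrow> \<not> g 0" and "P = 2 \<Longrightarrow> f 1 = g 0"
    and "\<not> f 1 \<Longrightarrow> \<not> g 0 \<Longrightarrow> t < n \<Longrightarrow> \<not> f t \<and> \<not> g t"
proof -
  have corner: "corner_label P Q f g = g P" using assms by (simp add: corner_label_def)
  have f_off: "\<not> f s" if "s < n" "s \<notin> {0, 1, P}" for s
    using row_check[of s] that assms by auto
  have f0: "f 0 = g P" using diag_check_0 corner assms by simp
  have f_before_P: "f (P - 1) = g P"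
  proof -
    have "1 \<le> P - 1" "P - 1 < n" "P - 1 \<noteq> P" "Suc (P - 1) = P" using assms P_less by auto
    then show ?thesis using diag_check[of "P - 1"] corner P_less assms by auto
  qed
  have g0: "g 0 = g P"
  proof -
    have "n - 1 < n" "n - 1 \<noteq> 0" "n - 1 \<noteq> 1" "1 \<le> n - 1" using n_ge_5 by auto
    then have "\<not> (n - 1 \<noteq> P \<and> f (n - 1))" using f_off[of "n - 1"] by auto
    then show ?thesis using diag_check[of "n - 1"] corner assms \<open>1 \<le> n - 1\<close> by auto
  qed
  show "\<not> g 0" if "P \<noteq> 2"
  proof -
    have "P - 1 < n" "P - 1 \<notin> {0, 1, P}" using that assms P_less by auto
    then show ?thesis using f_before_P g0 f_off[of "P - 1"] by simp
  qed
  show "f 1 = g 0" if "P = 2"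
    using f_before_P g0 that by simp
  assume f1: "\<not> f 1" and g0_off: "\<not> g 0" and "t < n"
  have gP: "\<not> g P" using g0 g0_off by simp
  have g_off: "\<not> g s" if "2 \<le> s" "s < n" "s \<noteq> P" for s
  proof -
    have "\<not> (s - 1 \<noteq> P \<and> f (s - 1))"
      using f_off[of "s - 1"] f1 that by (cases "s - 1 = 1") (auto simp: less_imp_diff_less)
    moreover have "1 \<le> s - 1" "s - 1 < n" "Suc (s - 1) mod n = s" using that by auto
    ultimately show ?thesis using diag_check[of "s - 1"] corner gP assms that by auto
  qed
  have fP: "\<not> f P"
    using row_check_vanish[of f] row_check_a f_off f1 f0 gP assms by auto
  show "\<not> f t \<and> \<not> g t"
    using f0 fP f1 f_off[of t] g_off[of t] g0_off gP f0_eq_g1 \<open>t < n\<close>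
    by (cases "t \<in> {0, 1, P}") auto
qed

lemma generic_star_checksI: "2 \<le> P \<Longrightarrow> 2 \<le> Q \<Longrightarrow> generic_star_checks n P Q f g"
  using star_checks_axioms by (simp add: generic_star_checks_def generic_star_checks_axioms_def)

lemma not_f1:
  assumes "(2 \<le> P \<and> P < Q) \<or> P = 0 \<or> (Q = 1 \<and> P \<noteq> n - 1)"
  shows "\<not> f 1"
  using assms
proof (elim disjE conjE)
  show "\<not> f 1" if "2 \<le> P" "P < Q"
    using generic_star_checks.not_f1_if_P_less_Q[OF generic_star_checksI] that by simp
  show "\<not> f 1" if "P = 0"
    using P_eq_0_case(1) P_eq_0_Q_eq_1_case(1) P_neq_Q that by (cases "Q = 1") auto
  show "\<not> f 1" if "Q = 1" "P \<noteq> n - 1"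
    using Q_eq_1_case(1) P_eq_0_Q_eq_1_case(1) P_neq_Q that by (cases "P = 0") auto
qed

lemma not_g0:
  assumes "(2 \<le> Q \<and> Q < P) \<or> P = 1 \<or> (Q = 0 \<and> P \<noteq> 2)"
  shows "\<not> g 0"
  using assms
proof (elim disjE conjE)
  show "\<not> g 0" if "2 \<le> Q" "Q < P"
    using generic_star_checks.not_g0_if_Q_less_P[OF generic_star_checksI] that by simp
  show "\<not> g 0" if "P = 1"
    using P_eq_1_case(1) P_eq_1_Q_eq_0_case(1) P_neq_Q that by (cases "Q = 0") auto
  show "\<not> g 0" if "Q = 0" "P \<noteq> 2"
    using Q_eq_0_case(1) P_eq_1_Q_eq_0_case(1) P_neq_Q that by (cases "P = 1") auto
qed

lemma f1_eq_g0: "(Q = 1 \<and> P = n - 1) \<or> (Q = 0 \<and> P = 2) \<Longrightarrow> f 1 = g 0"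
  using Q_eq_1_case(2) Q_eq_0_case(2) n_ge_5 by auto

lemma vanish:
  assumes "\<not> f 1" "\<not> g 0" "t < n"
  shows "\<not> f t \<and> \<not> g t"
proof -
  consider "2 \<le> P" "2 \<le> Q" | "P = 1" "2 \<le> Q" | "P = 0" "2 \<le> Q" | "Q = 1" "2 \<le> P" | "Q = 0" "2 \<le> P"
    | "P = 0" "Q = 1" | "P = 1" "Q = 0"
    using P_neq_Q by linarith
  then show ?thesis
  proof cases
    case 1
    then show ?thesis using generic_star_checks.vanish[OF generic_star_checksI] assms by blast
  qed (use assms P_eq_1_case(2) P_eq_0_case(2) Q_eq_1_case(3) Q_eq_0_case(3)
      P_eq_0_Q_eq_1_case(2) P_eq_1_Q_eq_0_case(2) in blast)+
qed

end

text \<open>The two orientations share the self-loops but swap P and Q; in each position pattern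
  one of them kills each loop label, possibly by identifying it with the other one.\<close>

lemma star_checks_pair_vanish:
  assumes down: "star_checks n P Q f g" and up: "star_checks n Q P f' g'"
    and "f' 1 = f 1" "g' 0 = g 0" "t < n"
  shows "\<not> f t \<and> \<not> g t \<and> \<not> f' t \<and> \<not> g' t"
proof -
  interpret down: star_checks n P Q f g by (fact down)
  interpret up: star_checks n Q P f' g' by (fact up)
  have "\<not> f 1 \<and> \<not> g 0"
  proof (cases "2 \<le> P \<and> 2 \<le> Q")
    case True
    then show ?thesis
      using down.not_f1 down.not_g0 up.not_f1 up.not_g0 down.P_neq_Q assms(3,4)
      by (cases "P < Q") auto
  next
    case False
    then consider "P = 0" | "P = 1" | "Q = 0" | "Q = 1" by linarith
    then show ?thesis
      using down.not_f1 down.not_g0 down.f1_eq_g0 up.not_f1 up.not_g0 up.f1_eq_g0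
        down.P_neq_Q assms(3,4)
      by cases (metis)+
  qed
  then show ?thesis
    using star_checks.vanish[OF down] star_checks.vanish[OF up] assms(3-5) by auto
qed

section \<open>From the checks of the code to the star relations\<close>

text \<open>The checks of one triangle: e x y is the edge between x and y in that triangle, cS is
  the node left out of the row checks and cD the node left out of the anti-diagonal checks,
  which contain the edge between cS and cD instead.\<close>

locale star_orientation =
  fixes n a b cS cD :: nat and e :: "nat \<Rightarrow> nat \<Rightarrow> nat \<times> nat" and M :: "nat \<times> nat \<Rightarrow> bool"
    and \<pi> :: "nat \<Rightarrow> nat" and P Q :: nat
  assumes n_ge_5: "5 \<le> n" and a_less: "a < n" and b_less: "b < n" and a_neq_b: "a \<noteq> b"
    and e_eq_iff: "\<And>x y x' y'. e x y = e x' y' \<longleftrightarrow> {x, y} = {x', y'}"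
    and cS_neq_cD: "cS \<noteq> cD" and less_n_minus_2_iff: "\<And>h. h < n - 2 \<longleftrightarrow> h < n \<and> h \<noteq> cS \<and> h \<noteq> cD"
    and support: "\<And>x y. M (e x y) \<Longrightarrow> x \<in> {a, b} \<or> y \<in> {a, b}"
    and row_checks: "\<And>h. h < n - 2 \<Longrightarrow> even (card {p \<in> {e h l | l. l < n \<and> l \<noteq> cS}. M p})"
    and diag_checks: "\<And>m. m < n \<Longrightarrow> even (card {p \<in> {e k l | k l. k < n \<and> k \<noteq> cD \<and> l < n \<and> l \<noteq> cD
      \<and> (k + l) mod n = m} \<union> {e cS cD}. M p})"
    and bij_\<pi>: "bij_betw \<pi> {..<n} {..<n}" and \<pi>_0: "\<pi> 0 = b" and \<pi>_1: "\<pi> 1 = a"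
    and \<pi>_step: "\<And>t. t < n \<Longrightarrow> (b + \<pi> (Suc t mod n)) mod n = (a + \<pi> t) mod n"
    and P_less: "P < n" and \<pi>_P: "\<pi> P = cD" and Q_less: "Q < n" and \<pi>_Q: "\<pi> Q = cS"
begin

lemma e_sym: "e x y = e y x"
  using e_eq_iff by (simp add: insert_commute)

lemma \<pi>_less: "t < n \<Longrightarrow> \<pi> t < n"
  using bij_\<pi> by (auto dest: bij_betwE)

lemma \<pi>_eq_iff: "t < n \<Longrightarrow> t' < n \<Longrightarrow> \<pi> t = \<pi> t' \<longleftrightarrow> t = t'"
  using bij_\<pi> by (auto simp: bij_betw_def inj_on_def)

lemma \<pi>_surj: assumes "l < n" obtains t where "t < n" "\<pi> t = l"
proof -
  have "l \<in> \<pi> ` {..<n}" using bij_\<pi> assms by (simp add: bij_betw_def)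
  then show ?thesis using that by blast
qed

lemma \<pi>_eq_a_iff: "t < n \<Longrightarrow> \<pi> t = a \<longleftrightarrow> t = 1"
  using \<pi>_eq_iff[of t 1] \<pi>_1 n_ge_5 by auto

lemma \<pi>_eq_b_iff: "t < n \<Longrightarrow> \<pi> t = b \<longleftrightarrow> t = 0"
  using \<pi>_eq_iff[of t 0] \<pi>_0 n_ge_5 by auto

lemma \<pi>_eq_cD_iff: "t < n \<Longrightarrow> \<pi> t = cD \<longleftrightarrow> t = P"
  using \<pi>_eq_iff[of t P] \<pi>_P P_less by auto

lemma \<pi>_eq_cS_iff: "t < n \<Longrightarrow> \<pi> t = cS \<longleftrightarrow> t = Q"
  using \<pi>_eq_iff[of t Q] \<pi>_Q Q_less by auto

lemma a_eq_iff: "a = cS \<longleftrightarrow> Q = 1" "a = cD \<longleftrightarrow> P = 1"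
  using \<pi>_eq_cS_iff[of 1] \<pi>_eq_cD_iff[of 1] \<pi>_1 n_ge_5 by auto

lemma b_eq_iff: "b = cS \<longleftrightarrow> Q = 0" "b = cD \<longleftrightarrow> P = 0"
  using \<pi>_eq_cS_iff[of 0] \<pi>_eq_cD_iff[of 0] \<pi>_0 n_ge_5 by auto

lemma P_neq_Q: "P \<noteq> Q"
  using \<pi>_P \<pi>_Q cS_neq_cD by auto

lemma corner_edge:
  "M (e cS cD) = corner_label P Q (\<lambda>t. M (e a (\<pi> t))) (\<lambda>t. M (e b (\<pi> t)))"
proof -
  have "\<not> M (e cS cD)" if "P \<noteq> 1" "Q \<noteq> 1" "P \<noteq> 0" "Q \<noteq> 0"
    using support[of cS cD] a_eq_iff b_eq_iff that by auto
  then show ?thesis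
    using a_eq_iff b_eq_iff \<pi>_P \<pi>_Q e_sym P_neq_Q by (auto simp: corner_label_def)
qed

lemma row_sum:
  assumes "c < n - 2"
  shows "even (card {t. t < n \<and> t \<noteq> Q \<and> M (e c (\<pi> t))})"
proof -
  let ?T = "{t. t < n \<and> t \<noteq> Q \<and> M (e c (\<pi> t))}"
  have "{p \<in> {e c l | l. l < n \<and> l \<noteq> cS}. M p} = (\<lambda>t. e c (\<pi> t)) ` ?T"
  proof (intro set_eqI iffI)
    fix p assume "p \<in> {p \<in> {e c l | l. l < n \<and> l \<noteq> cS}. M p}"
    then obtain l where l: "p = e c l" "l < n" "l \<noteq> cS" "M p" by auto
    then obtain t where "t < n" "\<pi> t = l" using \<pi>_surj by blast
    then show "p \<in> (\<lambda>t. e c (\<pi> t)) ` ?T" using l \<pi>_eq_cS_iff by auto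
  next
    fix p assume "p \<in> (\<lambda>t. e c (\<pi> t)) ` ?T"
    then obtain t where "p = e c (\<pi> t)" "t < n" "t \<noteq> Q" "M p" by auto
    then show "p \<in> {p \<in> {e c l | l. l < n \<and> l \<noteq> cS}. M p}"
      using \<pi>_less[of t] \<pi>_eq_cS_iff[of t] by blast
  qed
  moreover have "inj_on (\<lambda>t. e c (\<pi> t)) ?T"
    by (rule inj_onI) (auto simp: e_eq_iff doubleton_eq_iff \<pi>_eq_iff)
  ultimately show ?thesis
    using row_checks[OF assms] by (simp add: card_image)
qed

lemma row_check_two_edges:
  assumes "h < n" "h \<notin> {a, b, cS, cD}"
  shows "(a \<noteq> cS \<and> M (e h a)) \<longleftrightarrow> (b \<noteq> cS \<and> M (e h b))"
proof -
  have "{p \<in> {e h l | l. l < n \<and> l \<noteq> cS}. M p} =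
      {p. (p = e h a \<and> a \<noteq> cS \<or> p = e h b \<and> b \<noteq> cS) \<and> M p}"
    using support[of h] assms a_less b_less by blast
  moreover have "e h a \<noteq> e h b"
    using a_neq_b by (auto simp: e_eq_iff doubleton_eq_iff)
  ultimately show ?thesis
    using row_checks[of h] assms less_n_minus_2_iff
      even_card_two_iff[of "a \<noteq> cS" "b \<noteq> cS" "e h a" "e h b" M]
    by auto
qed

lemma diag_support:
  assumes "t < n" "k < n" "l < n" "(k + l) mod n = (a + \<pi> t) mod n" "M (e k l)"
  shows "e k l = e a (\<pi> t) \<or> e k l = e b (\<pi> (Suc t mod n))"
proof -
  have "y = \<pi> t" if "y < n" "(a + y) mod n = (a + \<pi> t) mod n" for y
    using mod_add_left_cancel_less that \<pi>_less assms(1) by blast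
  moreover have "y = \<pi> (Suc t mod n)" if "y < n" "(b + y) mod n = (a + \<pi> t) mod n" for y
  proof (rule mod_add_left_cancel_less[of b])
    show "\<pi> (Suc t mod n) < n" using \<pi>_less assms(1) by simp
  qed (use that \<pi>_step[OF assms(1)] in auto)
  ultimately have end_in_star: "e x y = e a (\<pi> t) \<or> e x y = e b (\<pi> (Suc t mod n))"
    if "x \<in> {a, b}" "y < n" "(x + y) mod n = (a + \<pi> t) mod n" for x y
    using that by auto
  have "k \<in> {a, b} \<or> l \<in> {a, b}" using support assms(5) by blast
  then show ?thesis
  proof
    assume "k \<in> {a, b}"
    then show ?thesis using end_in_star[of k l] assms(3,4) by blast
  next
    assume "l \<in> {a, b}"
    then show ?thesis using end_in_star[of l k] assms(2,4) e_sym[of l k] by (simp add: add.commute)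
  qed
qed

lemma diag_check_edges:
  assumes "t < n"
  shows "{p \<in> {e k l | k l. k < n \<and> k \<noteq> cD \<and> l < n \<and> l \<noteq> cD \<and> (k + l) mod n = (a + \<pi> t) mod n}
      \<union> {e cS cD}. M p} = {p. (p = e a (\<pi> t) \<and> a \<noteq> cD \<and> \<pi> t \<noteq> cD
      \<or> p = e b (\<pi> (Suc t mod n)) \<and> b \<noteq> cD \<and> \<pi> (Suc t mod n) \<noteq> cD \<or> p = e cS cD) \<and> M p}"
    (is "?D = ?E")
proof (intro set_eqI iffI)
  fix p assume "p \<in> ?D"
  then consider "p = e cS cD" "M p" | k l where "p = e k l" "k < n" "k \<noteq> cD" "l < n" "l \<noteq> cD"
    "(k + l) mod n = (a + \<pi> t) mod n" "M p" by blast
  then show "p \<in> ?E"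
  proof cases
    case (2 k l)
    then have "e k l = e a (\<pi> t) \<or> e k l = e b (\<pi> (Suc t mod n))"
      using diag_support assms by blast
    with 2 show ?thesis by (auto simp: e_eq_iff doubleton_eq_iff)
  qed simp
next
  fix p assume "p \<in> ?E"
  moreover have "Suc t mod n < n" using assms by simp
  ultimately show "p \<in> ?D"
    using a_less b_less \<pi>_less assms \<pi>_step[OF assms] by blast
qed

lemma diag_check_at_0: "(a \<noteq> cD \<and> b \<noteq> cD \<and> M (e a b)) \<longleftrightarrow> M (e cS cD)"
proof -
  have "Suc 0 mod n = 1" using n_ge_5 by simp
  then have "{p \<in> {e k l | k l. k < n \<and> k \<noteq> cD \<and> l < n \<and> l \<noteq> cD \<and> (k + l) mod n = (a + \<pi> 0) mod n}
      \<union> {e cS cD}. M p} = {p. (p = e a b \<and> (a \<noteq> cD \<and> b \<noteq> cD) \<or> p = e cS cD \<and> True) \<and> M p}"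
    using diag_check_edges[of 0] n_ge_5 \<pi>_0 \<pi>_1 e_sym[of b a] by auto
  moreover have "e a b \<noteq> e cS cD" if "a \<noteq> cD" "b \<noteq> cD"
    using that by (auto simp: e_eq_iff doubleton_eq_iff)
  ultimately show ?thesis
    using diag_checks[of "(a + \<pi> 0) mod n"] n_ge_5
      even_card_two_iff[of "a \<noteq> cD \<and> b \<noteq> cD" True "e a b" "e cS cD" M]
    by auto
qed

lemma diag_check_three_edges:
  assumes "1 \<le> t" "t < n"
  shows "((a \<noteq> cD \<and> \<pi> t \<noteq> cD \<and> M (e a (\<pi> t))) \<noteq>
      (b \<noteq> cD \<and> \<pi> (Suc t mod n) \<noteq> cD \<and> M (e b (\<pi> (Suc t mod n))))) \<longleftrightarrow> M (e cS cD)"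
proof -
  let ?u = "e a (\<pi> t)" and ?v = "e b (\<pi> (Suc t mod n))"
  let ?cu = "a \<noteq> cD \<and> \<pi> t \<noteq> cD" and ?cv = "b \<noteq> cD \<and> \<pi> (Suc t mod n) \<noteq> cD"
  have "?u \<noteq> ?v"
    using \<pi>_eq_b_iff assms a_neq_b by (auto simp: e_eq_iff doubleton_eq_iff)
  moreover have "?cu \<Longrightarrow> ?u \<noteq> e cS cD" "?cv \<Longrightarrow> ?v \<noteq> e cS cD"
    by (auto simp: e_eq_iff doubleton_eq_iff)
  ultimately show ?thesis
    using diag_checks[of "(a + \<pi> t) mod n"] diag_check_edges[OF assms(2)] n_ge_5
      even_card_three_iff[of ?cu ?cv ?u ?v "e cS cD" M]
    by auto
qed

lemma star_checks: "star_checks n P Q (\<lambda>t. M (e a (\<pi> t))) (\<lambda>t. M (e b (\<pi> t)))"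
proof
  show "5 \<le> n" "P < n" "Q < n" "P \<noteq> Q" by (fact n_ge_5 P_less Q_less P_neq_Q)+
  show "M (e a (\<pi> 0)) = M (e b (\<pi> 1))" using \<pi>_0 \<pi>_1 e_sym by simp
next
  fix t assume "t < n" "t \<notin> {0, 1, P, Q}"
  then show "(Q \<noteq> 1 \<and> M (e a (\<pi> t))) = (Q \<noteq> 0 \<and> M (e b (\<pi> t)))"
    using row_check_two_edges[of "\<pi> t"] \<pi>_less \<pi>_eq_a_iff \<pi>_eq_b_iff \<pi>_eq_cS_iff \<pi>_eq_cD_iff
      a_eq_iff b_eq_iff e_sym by auto
next
  show "even (card {t. t < n \<and> t \<noteq> Q \<and> M (e a (\<pi> t))})" if "P \<noteq> 1" "Q \<noteq> 1"
    using row_sum[of a] less_n_minus_2_iff[of a] a_less a_eq_iff that by auto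
  show "even (card {t. t < n \<and> t \<noteq> Q \<and> M (e b (\<pi> t))})" if "P \<noteq> 0" "Q \<noteq> 0"
    using row_sum[of b] less_n_minus_2_iff[of b] b_less b_eq_iff that by auto
  show "(P \<noteq> 0 \<and> P \<noteq> 1 \<and> M (e a (\<pi> 0))) =
      corner_label P Q (\<lambda>t. M (e a (\<pi> t))) (\<lambda>t. M (e b (\<pi> t)))"
    using diag_check_at_0 corner_edge a_eq_iff b_eq_iff \<pi>_0 by auto
next
  fix t assume t: "1 \<le> t" "t < n"
  have "Suc t mod n < n" using t by simp
  then have "(a \<noteq> cD \<and> \<pi> t \<noteq> cD) = (t \<noteq> P \<and> P \<noteq> 1)"
    "(b \<noteq> cD \<and> \<pi> (Suc t mod n) \<noteq> cD) = (Suc t mod n \<noteq> P \<and> P \<noteq> 0)"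
    using a_eq_iff b_eq_iff \<pi>_eq_cD_iff t by auto
  then show "((t \<noteq> P \<and> P \<noteq> 1 \<and> M (e a (\<pi> t))) \<noteq>
      (Suc t mod n \<noteq> P \<and> P \<noteq> 0 \<and> M (e b (\<pi> (Suc t mod n))))) =
      corner_label P Q (\<lambda>t. M (e a (\<pi> t))) (\<lambda>t. M (e b (\<pi> t)))"
    using diag_check_three_edges[OF t] corner_edge by blast
qed

end

lemma edge_down_eq_iff: "edge_down x y = edge_down x' y' \<longleftrightarrow> {x, y} = {x', y'}"
  by (auto simp: edge_down_def doubleton_eq_iff max_def min_def)

lemma edge_up_eq_iff: "edge_up x y = edge_up x' y' \<longleftrightarrow> {x, y} = {x', y'}"
  by (auto simp: edge_up_def doubleton_eq_iff max_def min_def)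

locale two_star_codeword =
  fixes n a b :: nat and L :: "nat \<Rightarrow> nat \<Rightarrow> bool"
  assumes prime_n: "prime n" and n_ge_5: "5 \<le> n" and a_less: "a < n" and b_less: "b < n"
    and a_neq_b: "a \<noteq> b" and codeword: "L \<in> code_G4 n"
    and support: "\<And>i j. L i j \<Longrightarrow> i \<in> {a, b} \<or> j \<in> {a, b}"
begin

definition \<pi> :: "nat \<Rightarrow> nat" where
  "\<pi> t = (b + t * ((a + n - b) mod n)) mod n" \<comment> \<open>the step is a - b without truncated subtraction\<close>

lemmas \<pi>_props = progression_mod_prime[OF prime_n a_less b_less a_neq_b, folded \<pi>_def]

definition P :: nat where "P = inv_into {..<n} \<pi> (n - 2)"
definition Q :: nat where "Q = inv_into {..<n} \<pi> (n - 1)"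

lemma P_position: "P < n" "\<pi> P = n - 2" and Q_position: "Q < n" "\<pi> Q = n - 1"
  using bij_betw_inv_into_right[OF \<pi>_props(1)] bij_betw_inv_into[OF \<pi>_props(1)] n_ge_5
  unfolding P_def Q_def by (auto dest: bij_betwE)

lemma codeword_checks:
  "\<And>h. h < n - 2 \<Longrightarrow> parity_zero L (S_down n h)" "\<And>m. m < n \<Longrightarrow> parity_zero L (D_down n m)"
  "\<And>h. h < n - 2 \<Longrightarrow> parity_zero L (S_up n h)" "\<And>m. m < n \<Longrightarrow> parity_zero L (D_up n m)"
  using codeword by (auto simp: code_G4_def)

lemma orientation_down:
  "star_orientation n a b (n - 1) (n - 2) edge_down (\<lambda>p. L (fst p) (snd p)) \<pi> P Q"
proof
  show "x \<in> {a, b} \<or> y \<in> {a, b}" if "L (fst (edge_down x y)) (snd (edge_down x y))" for x y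
    using support that by (auto simp: edge_down_def max_def min_def split: if_splits)
  show "even (card {p \<in> {edge_down h l | l. l < n \<and> l \<noteq> n - 1}. L (fst p) (snd p)})"
    if "h < n - 2" for h
  proof -
    have "\<And>l. l < n \<and> l \<noteq> n - 1 \<longleftrightarrow> l < n - 1" by auto
    then have "{edge_down h l | l. l < n \<and> l \<noteq> n - 1} = S_down n h"
      unfolding S_down_def by simp
    then show ?thesis using codeword_checks(1)[OF that] by (simp add: parity_zero_def)
  qed
  show "even (card {p \<in> {edge_down k l | k l. k < n \<and> k \<noteq> n - 2 \<and> l < n \<and> l \<noteq> n - 2
      \<and> (k + l) mod n = m} \<union> {edge_down (n - 1) (n - 2)}. L (fst p) (snd p)})" if "m < n" for m
    using codeword_checks(2)[OF that] by (simp add: parity_zero_def D_down_def edge_down_def)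
  show "n - 1 \<noteq> n - 2" "\<And>h. h < n - 2 \<longleftrightarrow> h < n \<and> h \<noteq> n - 1 \<and> h \<noteq> n - 2"
    using n_ge_5 by auto
qed (fact n_ge_5 a_less b_less a_neq_b edge_down_eq_iff \<pi>_props P_position Q_position
    | rule \<pi>_props(4))+

lemma orientation_up:
  "star_orientation n a b (n - 2) (n - 1) edge_up (\<lambda>p. L (fst p) (snd p)) \<pi> Q P"
proof
  show "x \<in> {a, b} \<or> y \<in> {a, b}" if "L (fst (edge_up x y)) (snd (edge_up x y))" for x y
    using support that by (auto simp: edge_up_def max_def min_def split: if_splits)
  show "even (card {p \<in> {edge_up h l | l. l < n \<and> l \<noteq> n - 2}. L (fst p) (snd p)})"
    if "h < n - 2" for h
    using codeword_checks(3)[OF that] by (simp add: parity_zero_def S_up_def)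
  show "even (card {p \<in> {edge_up k l | k l. k < n \<and> k \<noteq> n - 1 \<and> l < n \<and> l \<noteq> n - 1
      \<and> (k + l) mod n = m} \<union> {edge_up (n - 2) (n - 1)}. L (fst p) (snd p)})" if "m < n" for m
  proof -
    have "\<And>k. k < n - 1 \<longleftrightarrow> k < n \<and> k \<noteq> n - 1" by auto
    then have "{edge_up k l | k l. k < n - 1 \<and> l < n - 1 \<and> (k + l) mod n = m} =
        {edge_up k l | k l. k < n \<and> k \<noteq> n - 1 \<and> l < n \<and> l \<noteq> n - 1 \<and> (k + l) mod n = m}"
      by (simp only: conj_assoc)
    then show ?thesis
      using codeword_checks(4)[OF that] by (simp add: parity_zero_def D_up_def edge_up_def)
  qed
  show "n - 2 \<noteq> n - 1" "\<And>h. h < n - 2 \<longleftrightarrow> h < n \<and> h \<noteq> n - 2 \<and> h \<noteq> n - 1"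
    using n_ge_5 by auto
qed (fact n_ge_5 a_less b_less a_neq_b edge_up_eq_iff \<pi>_props P_position Q_position
    | rule \<pi>_props(4))+

lemma vanishes: "\<not> L i j"
proof
  assume "L i j"
  have ij: "i < n" "j < n" using \<open>L i j\<close> codeword by (auto simp: code_G4_def binary_graphs_def)
  let ?M = "\<lambda>p. L (fst p) (snd p)"
  have stars_vanish: "\<not> ?M (edge_down x (\<pi> t)) \<and> \<not> ?M (edge_up x (\<pi> t))"
    if "x \<in> {a, b}" "t < n" for x t
    using star_checks_pair_vanish[OF star_orientation.star_checks[OF orientation_down]
        star_orientation.star_checks[OF orientation_up] _ _ \<open>t < n\<close>] \<pi>_props(2,3) that
    by (auto simp: edge_down_def edge_up_def)
  have edges: "?M (edge_down i j) \<or> ?M (edge_up i j)" "?M (edge_down j i) \<or> ?M (edge_up j i)"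
    using \<open>L i j\<close> by (auto simp: edge_down_def edge_up_def max_def min_def)
  from support[OF \<open>L i j\<close>] show False
  proof
    assume "i \<in> {a, b}"
    moreover obtain t where "t < n" "\<pi> t = j"
      using star_orientation.\<pi>_surj[OF orientation_down ij(2)] .
    ultimately show False using stars_vanish[of i t] edges(1) by auto
  next
    assume "j \<in> {a, b}"
    moreover obtain t where "t < n" "\<pi> t = i"
      using star_orientation.\<pi>_surj[OF orientation_down ij(1)] .
    ultimately show False using stars_vanish[of j t] edges(2) by auto
  qed
qed

end

section \<open>Erasure correction and size of the code\<close>

lemma finite_S_down: "finite (S_down n h)"
  unfolding S_down_def by simp

lemma finite_S_up: "finite (S_up n h)"
  by (rule finite_subset[of _ "(\<lambda>l. edge_up h l) ` {..<n}"]) (auto simp: S_up_def)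

lemma finite_D_down: "finite (D_down n m)"
  by (rule finite_subset[of _ "{..<n} \<times> {..<n} \<union> {(n - 1, n - 2)}"])
    (auto simp: D_down_def edge_down_def max_def min_def)

lemma finite_D_up: "finite (D_up n m)"
  by (rule finite_subset[of _ "{..<n} \<times> {..<n} \<union> {(n - 2, n - 1)}"])
    (auto simp: D_up_def edge_up_def max_def min_def)

lemma parity_zero_xor:
  assumes "finite S" "parity_zero L1 S" "parity_zero L2 S"
  shows "parity_zero (\<lambda>i j. L1 i j \<noteq> L2 i j) S"
proof -
  have "{p \<in> S. L1 (fst p) (snd p) \<noteq> L2 (fst p) (snd p)} =
      sym_diff {p \<in> S. L1 (fst p) (snd p)} {p \<in> S. L2 (fst p) (snd p)}" by blast
  then show ?thesis
    using assms
      even_card_sym_diff_iff[of "{p \<in> S. L1 (fst p) (snd p)}" "{p \<in> S. L2 (fst p) (snd p)}"]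
    by (simp add: parity_zero_def)
qed

lemma code_G4_xor:
  assumes "L1 \<in> code_G4 n" "L2 \<in> code_G4 n"
  shows "(\<lambda>i j. L1 i j \<noteq> L2 i j) \<in> code_G4 n"
  using assms parity_zero_xor[OF finite_S_down] parity_zero_xor[OF finite_D_down]
    parity_zero_xor[OF finite_S_up] parity_zero_xor[OF finite_D_up]
  by (simp add: code_G4_def binary_graphs_def)

lemma code_G4_eq_if_agree_off_two_nodes:
  assumes "prime n" "5 \<le> n" "a < n" "b < n" "a \<noteq> b" and L: "L1 \<in> code_G4 n" "L2 \<in> code_G4 n"
    and agree: "\<And>i j. i < n \<Longrightarrow> j < n \<Longrightarrow> i \<notin> {a, b} \<Longrightarrow> j \<notin> {a, b} \<Longrightarrow> L1 i j = L2 i j"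
  shows "L1 = L2"
proof -
  have "two_star_codeword n a b (\<lambda>i j. L1 i j \<noteq> L2 i j)"
  proof
    show "(\<lambda>i j. L1 i j \<noteq> L2 i j) \<in> code_G4 n" using code_G4_xor[OF L] .
    have "L1 \<in> binary_graphs n" "L2 \<in> binary_graphs n" using L by (simp_all add: code_G4_def)
    then show "i \<in> {a, b} \<or> j \<in> {a, b}" if "L1 i j \<noteq> L2 i j" for i j
      using that agree unfolding binary_graphs_def by blast
  qed (fact assms)+
  then show "L1 = L2" using two_star_codeword.vanishes by blast
qed

theorem code_G4_node_erasure_correcting:
  assumes "prime n" "5 \<le> n"
  shows "node_erasure_correcting n 2 (code_G4 n)"
  unfolding node_erasure_correcting_def
proof (intro allI impI ballI)
  fix F L1 L2
  assume F: "F \<subseteq> {..<n} \<and> card F = 2" and L: "L1 \<in> code_G4 n" "L2 \<in> code_G4 n"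
    and agree: "\<forall>i<n. \<forall>j<n. i \<notin> F \<and> j \<notin> F \<longrightarrow> L1 i j = L2 i j"
  obtain a b where ab: "F = {a, b}" "a \<noteq> b" using F by (auto simp: card_2_iff)
  show "L1 = L2"
    by (rule code_G4_eq_if_agree_off_two_nodes[of n a b, OF assms _ _ _ L]) (use F agree ab in auto)
qed

text \<open>Check (k, h) is the check of family (a), (b), (c), (d) for k = 0, 1, 2, 3.\<close>

definition check_index :: "nat \<Rightarrow> (nat \<times> nat) set" where
  "check_index n = {0, 2} \<times> {..<n - 2} \<union> {1, 3} \<times> {..<n}"

definition check_set :: "nat \<Rightarrow> nat \<times> nat \<Rightarrow> (nat \<times> nat) set" where
  "check_set n c = (if fst c = 0 then S_down n (snd c) else if fst c = 1 then D_down n (snd c)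
    else if fst c = 2 then S_up n (snd c) else D_up n (snd c))"

lemma card_check_index: "2 \<le> n \<Longrightarrow> card (check_index n) = 4 * n - 4"
  unfolding check_index_def by (subst card_Un_disjoint) (auto simp: card_cartesian_product)

lemma finite_check_set: "finite (check_set n c)"
  by (simp add: check_set_def finite_S_down finite_S_up finite_D_down finite_D_up)

lemma graph_in_code_G4_iff:
  assumes "X \<subseteq> {..<n} \<times> {..<n}"
  shows "(\<lambda>i j. (i, j) \<in> X) \<in> code_G4 n \<longleftrightarrow> (\<forall>c \<in> check_index n. even (card (check_set n c \<inter> X)))"
proof -
  have parity: "parity_zero (\<lambda>i j. (i, j) \<in> X) S \<longleftrightarrow> even (card (S \<inter> X))" for S
    by (simp add: parity_zero_def Int_def)
  have ball: "(\<forall>c \<in> check_index n. R c) \<longleftrightarrow> (\<forall>h < n - 2. R (0, h)) \<and> (\<forall>m < n. R (1, m)) \<and>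
      (\<forall>h < n - 2. R (2, h)) \<and> (\<forall>m < n. R (3, m))" for R
    by (auto simp: check_index_def)
  have "(\<lambda>i j. (i, j) \<in> X) \<in> binary_graphs n" using assms by (auto simp: binary_graphs_def)
  then show ?thesis unfolding code_G4_def ball check_set_def by (simp add: parity)
qed

definition block :: "nat \<Rightarrow> (nat \<times> nat) set" where
  "block n = {..<n - 2} \<times> {..<n - 2}"

definition restrict_block :: "nat \<Rightarrow> (nat \<Rightarrow> nat \<Rightarrow> bool) \<Rightarrow> (nat \<times> nat) set" where
  "restrict_block n L = {p \<in> block n. L (fst p) (snd p)}"

lemma inj_on_restrict_block:
  assumes "prime n" "5 \<le> n"
  shows "inj_on (restrict_block n) (code_G4 n)"
proof (rule inj_onI)
  fix L1 L2 assume L: "L1 \<in> code_G4 n" "L2 \<in> code_G4 n" "restrict_block n L1 = restrict_block n L2"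
  show "L1 = L2"
  proof (rule code_G4_eq_if_agree_off_two_nodes[OF assms _ _ _ L(1,2)])
    fix i j assume "i < n" "j < n" "i \<notin> {n - 2, n - 1}" "j \<notin> {n - 2, n - 1}"
    then have "(i, j) \<in> block n" by (auto simp: block_def)
    then show "L1 i j = L2 i j" using L(3) by (auto simp: restrict_block_def set_eq_iff)
  qed (use assms(2) in auto)
qed

lemma codeword_off_block_empty:
  assumes "prime n" "5 \<le> n" "Z \<subseteq> {..<n} \<times> {..<n} - block n" "(\<lambda>i j. (i, j) \<in> Z) \<in> code_G4 n"
  shows "Z = {}"
proof -
  have "two_star_codeword n (n - 2) (n - 1) (\<lambda>i j. (i, j) \<in> Z)"
  proof
    show "i \<in> {n - 2, n - 1} \<or> j \<in> {n - 2, n - 1}" if "(i, j) \<in> Z" for i j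
      using that assms(3) by (auto simp: block_def)
  qed (use assms in auto)
  then show ?thesis using two_star_codeword.vanishes by fast
qed

lemma restrict_block_image:
  assumes "prime n" "5 \<le> n"
  shows "restrict_block n ` code_G4 n = Pow (block n)"
proof
  show "restrict_block n ` code_G4 n \<subseteq> Pow (block n)" by (auto simp: restrict_block_def)
  show "Pow (block n) \<subseteq> restrict_block n ` code_G4 n"
  proof
    fix Y assume Y: "Y \<in> Pow (block n)"
    define E where "E = {..<n} \<times> {..<n} - block n"
    have "card E = n ^ 2 - (n - 2) ^ 2"
      unfolding E_def block_def
      by (subst card_Diff_subset) (auto simp: card_cartesian_product power2_eq_square)
    then have "card E = card (check_index n)"
      using square_eq_square_minus_2_plus[of n] card_check_index[of n] assms(2) by simp
    obtain X where X: "X \<subseteq> E" "\<forall>c \<in> check_index n. even (card (check_set n c \<inter> (X \<union> Y)))"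
    proof (rule parity_checks_solvable[of "check_index n" E "check_set n" Y])
      show "finite (check_index n)" by (simp add: check_index_def)
      show "finite E" by (simp add: E_def)
      show "card E = card (check_index n)" by fact
      show "finite (check_set n c)" for c by (rule finite_check_set)
      show "Z = {}" if "Z \<subseteq> E" "\<forall>c \<in> check_index n. even (card (check_set n c \<inter> Z))" for Z
        using that codeword_off_block_empty[OF assms, of Z] graph_in_code_G4_iff[of Z n]
        by (auto simp: E_def)
      show "Y \<inter> E = {}" using Y by (auto simp: E_def)
    qed (rule that)
    moreover have "X \<union> Y \<subseteq> {..<n} \<times> {..<n}" using X(1) Y by (auto simp: E_def block_def)
    ultimately have "(\<lambda>i j. (i, j) \<in> X \<union> Y) \<in> code_G4 n"
      using graph_in_code_G4_iff[of "X \<union> Y" n] by blast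
    moreover have "restrict_block n (\<lambda>i j. (i, j) \<in> X \<union> Y) = Y"
      using X(1) Y by (auto simp: restrict_block_def E_def)
    ultimately show "Y \<in> restrict_block n ` code_G4 n" by (metis imageI)
  qed
qed

theorem card_code_G4:
  assumes "prime n" "5 \<le> n"
  shows "card (code_G4 n) = 2 ^ (n - 2) ^ 2"
proof -
  have "card (code_G4 n) = card (Pow (block n))"
    using card_image[OF inj_on_restrict_block[OF assms]] restrict_block_image[OF assms] by simp
  also have "\<dots> = 2 ^ (n - 2) ^ 2"
    by (simp add: card_Pow block_def card_cartesian_product power2_eq_square)
  finally show ?thesis .
qed

theorem theorem3:
  fixes n :: nat
  assumes "prime n" and "n \<ge> 5"
  shows "optimal_node_erasure_code n 2 (code_G4 n) \<and>
         node_erasure_correcting n 2 (code_G4 n) \<and>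
         redundancy n (code_G4 n) = real (4 * n - 4)"
proof -
  have correcting: "node_erasure_correcting n 2 (code_G4 n)"
    using code_G4_node_erasure_correcting assms by blast
  have "code_dimension (code_G4 n) = real ((n - 2) ^ 2)"
    using card_code_G4 assms by (simp add: code_dimension_def log_nat_power)
  then have "redundancy n (code_G4 n) = real (n ^ 2) - real ((n - 2) ^ 2)"
    by (simp add: redundancy_def)
  moreover have "real (n ^ 2) - real ((n - 2) ^ 2) = real (4 * n - 4)"
    using square_eq_square_minus_2_plus[of n] assms(2) by simp
  moreover have "code_G4 n \<subseteq> binary_graphs n" by (auto simp: code_G4_def)
  ultimately show ?thesis using correcting by (simp add: optimal_node_erasure_code_def)
qed

end
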